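(* For $m\ge1$, let $\mathbf{B}_m$ be the $m\times m$ symmetric tridiagonal matrix with diagonal entries $b_{kk}=4k^2-6k+3$ ($1\le k\le m$) and off-diagonal entries $b_{k,k+1}=b_{k+1,k}=-k(2k-1)$ ($1\le k\le m-1$), all other entries zero, and let $\mathbf{D}_m=\mathbf{B}_m-\frac12\mathbf{E}_m$ with $\mathbf{E}_m$ the identity matrix. Then for every $m\in\mathbb{N}$, $$\lambda_{\min}(\mathbf{B}_m)=\tfrac12+\lambda_{\min}(\mathbf{D}_m)>\tfrac12,$$ where $\lambda_{\min}$ denotes the smallest eigenvalue. *)

theory Defs
  imports Complex_Main "Jordan_Normal_Form.Char_Poly"
begin

text \<open>The m x m symmetric tridiagonal matrix B_m (indices are 0-based here;
  row/column index i corresponds to k = i + 1 in the paper).\<close>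
definition B_mat :: "nat \<Rightarrow> real mat" where
  "B_mat m = mat m m (\<lambda>(i, j).
      if i = j then 4 * (real i + 1)^2 - 6 * (real i + 1) + 3
      else if j = i + 1 then - ((real i + 1) * (2 * (real i + 1) - 1))
      else if i = j + 1 then - ((real j + 1) * (2 * (real j + 1) - 1))
      else 0)"

definition D_mat :: "nat \<Rightarrow> real mat" where
  "D_mat m = B_mat m - (1/2) \<cdot>\<^sub>m 1\<^sub>m m"

definition lambda_min :: "real mat \<Rightarrow> real" where
  "lambda_min A = Min {k. eigenvalue A k}"

end

theory Submission
  imports Defs
begin

(* With 0-based indices and m = k + 1 the quadratic form of B_m is a sum of squares,
     x' B_m x = |x|^2 / 2 + (\<Sum>i<k. ((2i+1) x_i - (2i+2) x_(i+1))^2 + ((2k+1) x_k)^2) / 2,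
   and the bracket vanishes only at x = 0 (solve backwards from x_k = 0).  Hence every eigenvalue
   of B_m exceeds 1/2.  Being real symmetric, B_m has a real eigenvalue, and subtracting I/2
   shifts the whole spectrum by 1/2. *)

lemma mult_mat_vec_conjugate:
  fixes A :: "complex mat"
  assumes "A \<in> carrier_mat n n" "v \<in> carrier_vec n"
    and "\<And>i j. i < n \<Longrightarrow> j < n \<Longrightarrow> A $$ (i, j) \<in> \<real>"
  shows "A *\<^sub>v conjugate v = conjugate (A *\<^sub>v v)"
proof (rule eq_vecI)
  fix i assume "i < dim_vec (conjugate (A *\<^sub>v v))"
  with assms have i: "i < n" by simp
  have "conjugate (row A i) = row A i"
    using assms(1,3) i by (intro eq_vecI) (auto simp: Reals_cnj_iff)
  then show "(A *\<^sub>v conjugate v) $ i = conjugate (A *\<^sub>v v) $ i"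
    using assms i conjugate_sprod_vec[of "row A i" n v] by simp
qed (use assms in auto)

lemma symmetric_real_mat_has_eigenvalue:
  fixes A :: "real mat"
  assumes A: "A \<in> carrier_mat n n" and n: "n > 0" and sym: "transpose_mat A = A"
  shows "\<exists>k. eigenvalue A k"
proof -
  let ?C = "map_mat complex_of_real A"
  have C: "?C \<in> carrier_mat n n" using A by simp
  have "degree (char_poly ?C) = n" using degree_monic_char_poly[OF C] by simp
  then obtain c where "poly (char_poly ?C) c = 0"
    using fundamental_theorem_of_algebra n unfolding constant_degree by auto
  then obtain v where v: "v \<in> carrier_vec n" "v \<noteq> 0\<^sub>v n" and Cv: "?C *\<^sub>v v = c \<cdot>\<^sub>v v"
    using eigenvalue_root_char_poly[OF C] C unfolding eigenvalue_def eigenvector_def by auto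
  have "c * (v \<bullet>c v) = (?C *\<^sub>v v) \<bullet>c v"
    using v by (simp add: Cv)
  also have "\<dots> = v \<bullet> (?C *\<^sub>v conjugate v)"
    using transpose_vec_mult_scalar[OF C, of "conjugate v" v] v sym
    by (simp add: map_mat_transpose)
  also have "\<dots> = cnj c * (v \<bullet>c v)"
    using v A by (simp add: mult_mat_vec_conjugate[OF C v(1)] Cv conjugate_smult_vec)
  finally have "c = cnj c"
    using v conjugate_square_eq_0_vec[OF v(1)] by simp
  then have "c = of_real (Re c)"
    by (metis Reals_cnj_iff of_real_Re)
  with \<open>poly (char_poly ?C) c = 0\<close> have "poly (char_poly A) (Re c) = 0"
    by (metis of_real_eq_0_iff of_real_hom.char_poly_hom[OF A] of_real_hom.poly_map_poly)
  then show ?thesis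
    using eigenvalue_root_char_poly[OF A] by blast
qed

lemma scalar_prod_mult_mat_vec_double_sum:
  fixes A :: "'a :: comm_semiring_0 mat"
  assumes "A \<in> carrier_mat n n" "v \<in> carrier_vec n"
  shows "v \<bullet> (A *\<^sub>v v) = (\<Sum>i<n. \<Sum>j<n. A $$ (i, j) * v $ i * v $ j)"
  using assms
  by (auto simp: scalar_prod_def atLeast0LessThan sum_distrib_left mult_ac intro!: sum.cong)

lemma eigenvalue_gt_if_quadratic_form_gt:
  fixes A :: "real mat"
  assumes A: "A \<in> carrier_mat n n"
    and form: "\<And>v. v \<in> carrier_vec n \<Longrightarrow> v \<noteq> 0\<^sub>v n \<Longrightarrow> c * (v \<bullet> v) < v \<bullet> (A *\<^sub>v v)"
    and r: "eigenvalue A r"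
  shows "c < r"
proof -
  from r A obtain v where v: "v \<in> carrier_vec n" "v \<noteq> 0\<^sub>v n" and Av: "A *\<^sub>v v = r \<cdot>\<^sub>v v"
    unfolding eigenvalue_def eigenvector_def by auto
  have "0 < v \<bullet> v"
    using conjugate_square_greater_0_vec[OF v(1)] v(2) by simp
  moreover have "c * (v \<bullet> v) < r * (v \<bullet> v)"
    using form[OF v] v(1) by (simp add: Av)
  ultimately show ?thesis by simp
qed

lemma eigenvalue_minus_smult_one_mat:
  fixes A :: "'a :: comm_ring_1 mat"
  assumes A: "A \<in> carrier_mat n n"
  shows "eigenvalue (A - c \<cdot>\<^sub>m 1\<^sub>m n) k \<longleftrightarrow> eigenvalue A (k + c)"
proof -
  have "(A - c \<cdot>\<^sub>m 1\<^sub>m n) *\<^sub>v v = k \<cdot>\<^sub>v v \<longleftrightarrow> A *\<^sub>v v = (k + c) \<cdot>\<^sub>v v"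
    if "v \<in> carrier_vec n" for v
    using A that by (auto simp: vec_eq_iff algebra_simps)
  then show ?thesis
    using A unfolding eigenvalue_def eigenvector_def by auto
qed

lemma finite_eigenvalues:
  fixes A :: "'a :: field mat"
  assumes A: "A \<in> carrier_mat n n"
  shows "finite {k. eigenvalue A k}"
proof -
  have "char_poly A \<noteq> 0" using degree_monic_char_poly[OF A] by auto
  then show ?thesis
    using poly_roots_finite eigenvalue_root_char_poly[OF A] by simp
qed

lemma lambda_min_minus_smult_one_mat:
  assumes A: "A \<in> carrier_mat n n" and ex: "\<exists>k. eigenvalue A k"
  shows "lambda_min A = c + lambda_min (A - c \<cdot>\<^sub>m 1\<^sub>m n)"
proof -
  let ?S = "{k. eigenvalue (A - c \<cdot>\<^sub>m 1\<^sub>m n) k}"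
  have S: "{k. eigenvalue A k} = (+) c ` ?S"
    by (auto simp: eigenvalue_minus_smult_one_mat[OF A] image_iff add.commute) (metis diff_add_cancel)
  have "finite ?S" using A by (intro finite_eigenvalues[of _ n] minus_carrier_mat) auto
  moreover have "?S \<noteq> {}" using ex S by auto
  ultimately show ?thesis
    unfolding lambda_min_def S by (simp add: mono_Min_commute[symmetric] mono_def)
qed

lemma eigenvalue_lambda_min:
  assumes "A \<in> carrier_mat n n" and "\<exists>k. eigenvalue A k"
  shows "eigenvalue A (lambda_min A)"
  using Min_in[OF finite_eigenvalues[OF assms(1)]] assms(2) unfolding lambda_min_def by auto

lemma sum_squares_bidiagonal_eq_0D:
  fixes a b x :: "nat \<Rightarrow> real"
  assumes a: "\<And>i. i \<le> k \<Longrightarrow> a i \<noteq> 0"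
    and zero: "(\<Sum>i<k. (a i * x i - b i * x (Suc i))\<^sup>2) + (a k * x k)\<^sup>2 = 0"
    and i: "i \<le> k"
  shows "x i = 0"
proof -
  have "(\<Sum>i<k. (a i * x i - b i * x (Suc i))\<^sup>2) = 0" and last: "(a k * x k)\<^sup>2 = 0"
    using zero by (simp_all add: add_nonneg_eq_0_iff sum_nonneg)
  then have link: "a j * x j = b j * x (Suc j)" if "j < k" for j
    using that by (simp add: sum_nonneg_eq_0_iff)
  from i show ?thesis
  proof (induction rule: inc_induct)
    case base
    show ?case using last a[of k] by simp
  next
    case (step j)
    then show ?case using link[of j] a[of j] by simp
  qed
qed

definition B_entry :: "nat \<Rightarrow> nat \<Rightarrow> real" where
  "B_entry i j = (if i = j then 4 * (real i + 1)^2 - 6 * (real i + 1) + 3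
      else if j = i + 1 then - ((real i + 1) * (2 * (real i + 1) - 1))
      else if i = j + 1 then - ((real j + 1) * (2 * (real j + 1) - 1))
      else 0)"

lemma B_mat_carrier: "B_mat m \<in> carrier_mat m m"
  by (simp add: B_mat_def)

lemma B_mat_index: "i < m \<Longrightarrow> j < m \<Longrightarrow> B_mat m $$ (i, j) = B_entry i j"
  by (simp add: B_mat_def B_entry_def)

lemma B_entry_sym: "B_entry i j = B_entry j i"
  by (simp add: B_entry_def)

lemma transpose_B_mat: "transpose_mat (B_mat m) = B_mat m"
  by (rule eq_matI) (auto simp: B_mat_index B_entry_sym B_mat_def)

lemma sum_B_entry_last_col:
  "(\<Sum>i<Suc k. B_entry i (Suc k) * x i) = - ((real k + 1) * (2 * real k + 1)) * x k"
proof -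
  have "(\<Sum>i<Suc k. B_entry i (Suc k) * x i)
      = (\<Sum>i<Suc k. if i = k then - ((real k + 1) * (2 * real k + 1)) * x k else 0)"
    by (intro sum.cong refl) (auto simp: B_entry_def algebra_simps)
  then show ?thesis by simp
qed

lemma B_quadratic_form_sum_squares:
  "(\<Sum>i<Suc k. \<Sum>j<Suc k. B_entry i j * x i * x j) =
     (\<Sum>i<Suc k. (x i)\<^sup>2) / 2
     + ((\<Sum>i<k. ((2 * real i + 1) * x i - (2 * real i + 2) * x (Suc i))\<^sup>2)
        + ((2 * real k + 1) * x k)\<^sup>2) / 2"
proof (induction k)
  case 0
  then show ?case by (simp add: B_entry_def power2_eq_square)
next
  case (Suc k)
  let ?f = "\<lambda>i j. B_entry i j * x i * x j"
  have cross: "(\<Sum>i<Suc k. ?f i (Suc k)) = x (Suc k) * (\<Sum>i<Suc k. B_entry i (Suc k) * x i)"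
    unfolding sum_distrib_left by (simp add: mult_ac)
  have row: "(\<Sum>j<Suc k. ?f (Suc k) j) = (\<Sum>i<Suc k. ?f i (Suc k))"
    by (intro sum.cong refl) (simp add: B_entry_sym[of "Suc k"])
  have "(\<Sum>i<Suc (Suc k). \<Sum>j<Suc (Suc k). ?f i j) =
      (\<Sum>i<Suc k. \<Sum>j<Suc k. ?f i j) + (\<Sum>i<Suc k. ?f i (Suc k)) + (\<Sum>j<Suc k. ?f (Suc k) j)
      + ?f (Suc k) (Suc k)"
    by (simp add: sum.distrib)
  also note row
  also have "B_entry (Suc k) (Suc k) = 4 * (real k)\<^sup>2 + 10 * real k + 7"
    by (simp add: B_entry_def power2_eq_square algebra_simps)
  finally show ?case
    unfolding Suc.IH cross sum_B_entry_last_col by (simp add: power2_eq_square field_simps)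
qed

lemma B_quadratic_form_gt:
  assumes v: "v \<in> carrier_vec m" "v \<noteq> 0\<^sub>v m"
  shows "1/2 * (v \<bullet> v) < v \<bullet> (B_mat m *\<^sub>v v)"
proof -
  obtain i where i: "i < m" "v $ i \<noteq> 0" using v by force
  then obtain k where m: "m = Suc k" by (cases m) auto
  define R where "R = (\<Sum>i<k. ((2 * real i + 1) * v $ i - (2 * real i + 2) * v $ Suc i)\<^sup>2)
        + ((2 * real k + 1) * v $ k)\<^sup>2"
  have "R \<noteq> 0"
  proof
    assume "R = 0"
    then have "v $ i = 0"
      using i m unfolding R_def
      by (intro sum_squares_bidiagonal_eq_0D[where a = "\<lambda>i. 2 * real i + 1"])
        (simp_all add: less_Suc_eq_le)
    with i show False by simp
  qed
  moreover have "0 \<le> R" by (simp add: R_def sum_nonneg)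
  moreover have "v \<bullet> v = (\<Sum>i<m. (v $ i)\<^sup>2)"
    using v(1) by (simp add: scalar_prod_def atLeast0LessThan power2_eq_square)
  moreover have "v \<bullet> (B_mat m *\<^sub>v v) = (\<Sum>i<m. \<Sum>j<m. B_entry i j * v $ i * v $ j)"
    using scalar_prod_mult_mat_vec_double_sum[OF B_mat_carrier v(1)] by (simp add: B_mat_index)
  moreover have "\<dots> = (\<Sum>i<m. (v $ i)\<^sup>2) / 2 + R / 2"
    unfolding m R_def by (rule B_quadratic_form_sum_squares)
  ultimately show ?thesis by simp
qed

theorem corollary4p2:
  fixes m :: nat
  assumes "m \<ge> 1"
  shows "lambda_min (B_mat m) = 1/2 + lambda_min (D_mat m) \<and> 1/2 < lambda_min (B_mat m)"
proof
  have ex: "\<exists>k. eigenvalue (B_mat m) k"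
    using symmetric_real_mat_has_eigenvalue[OF B_mat_carrier _ transpose_B_mat] assms by simp
  show "lambda_min (B_mat m) = 1/2 + lambda_min (D_mat m)"
    unfolding D_mat_def by (rule lambda_min_minus_smult_one_mat[OF B_mat_carrier ex])
  show "1/2 < lambda_min (B_mat m)"
    by (rule eigenvalue_gt_if_quadratic_form_gt[OF B_mat_carrier B_quadratic_form_gt
          eigenvalue_lambda_min[OF B_mat_carrier ex]])
qed

end
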